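(* Let $k,\ell\ge2$ and $c\le 1$. There is a constant $\delta>0$ such that with high probability no set of $t$ vertices of $\hat W_n=\hat W^{k,\ell}_{n,cn}$ with $0<t<\delta n$ (a set of total weight $\ell t$) induces edges of total weight $\ell t$ or more.
   Context: $\hat W_n$: weighted hypergraph with vertex set $\mathbb{Z}_n$, each vertex of weight $\ell$; ordinary edges $e_1,\dots,e_{cn}$, each a multiset of $k$ independent uniformly random elements of $\mathbb{Z}_n$, of weight $1$; helper edges $\{i,i+1\}$ for $i\in\mathbb{Z}_n$ (mod $n$), of weight $\ell-1$. A set $S$ of vertices induces an edge if all vertices of the edge lie in $S$. "With high probability" means with probability tending to $1$ as $n\to\infty$. *)

theory Defs
  imports "HOL-Probability.Probability"
begin

text \<open>Random ordinary edges of W_n: m independent edges, each a k-tuple of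
independent uniform elements of Z_n = {0..<n}.  The joint law is the uniform
distribution on all families E i j (i < m, j < k) with values in {0..<n},
which is the same as independent uniform choices.\<close>
definition edges_pmf :: "nat \<Rightarrow> nat \<Rightarrow> nat \<Rightarrow> (nat \<Rightarrow> nat \<Rightarrow> nat) pmf" where
  "edges_pmf n k m = pmf_of_set ({..<m} \<rightarrow>\<^sub>E ({..<k} \<rightarrow>\<^sub>E {..<n}))"

text \<open>Total weight of the edges induced by S: each ordinary edge i (weight 1)
is induced if all its vertices lie in S; each helper edge {i, i+1 mod n}
(weight l - 1) is induced if both endpoints lie in S.\<close>
definition induced_weight ::
  "nat \<Rightarrow> nat \<Rightarrow> nat \<Rightarrow> nat \<Rightarrow> (nat \<Rightarrow> nat \<Rightarrow> nat) \<Rightarrow> nat set \<Rightarrow> nat" where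
  "induced_weight n k m l E S =
     card {i \<in> {..<m}. E i ` {..<k} \<subseteq> S}
     + (l - 1) * card {i \<in> {..<n}. i \<in> S \<and> (i + 1) mod n \<in> S}"

end

theory Submission
  imports Defs
begin

text \<open>A set \<open>S\<close> of \<open>t < n\<close> vertices that splits into \<open>r \<ge> 1\<close> cyclic runs induces only \<open>t - r\<close>
  helper edges, so induced weight \<open>\<ge> l t\<close> forces at least \<open>m = t + r\<close> ordinary edges inside
  \<open>S\<close>. For a fixed \<open>S\<close> this has probability at most \<open>(cn choose m) (t/n)^(k m) \<le> (e t/n)^m\<close>.
  Summing over all \<open>S\<close> of size \<open>t\<close> with the generating function
  \<open>\<Sum>\<^sub>S z^runs(S) \<le> 2^t (1 + z)^n\<close> at \<open>z = e t/n\<close> gives at most \<open>C (C t/n)^(t-1)\<close>, which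
  decays geometrically in \<open>t\<close> once \<open>t < n/(4C)\<close>; the union bound over \<open>t\<close> is then \<open>O(1/n)\<close>.\<close>

section \<open>Runs of a set of integers\<close>

definition runs :: "nat set \<Rightarrow> nat" where
  "runs S = card {i \<in> S. Suc i \<notin> S}"

lemma runs_singleton [simp]: "runs {x} = 1"
proof -
  have "{i \<in> {x}. Suc i \<notin> {x}} = {x}"
    by auto
  then show ?thesis
    by (simp add: runs_def)
qed

lemma runs_insert_above:
  assumes "S \<subseteq> {..<n}"
  shows "runs (insert n S) = (if 0 < n \<and> n - 1 \<in> S then runs S else Suc (runs S))"
proof -
  have fin: "finite S" and "n \<notin> S"
    using assms finite_subset by auto
  have ends: "{i \<in> insert n S. Suc i \<notin> insert n S} = insert n ({i \<in> S. Suc i \<notin> S} - {n - 1})"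
    using assms by (auto simp: Suc_pred' dest: Suc_pred' [of n])
  show ?thesis
  proof (cases "0 < n \<and> n - 1 \<in> S")
    case True
    then have "n - 1 \<in> {i \<in> S. Suc i \<notin> S}"
      using \<open>n \<notin> S\<close> by auto
    moreover from this have "card {i \<in> S. Suc i \<notin> S} > 0"
      using fin by (auto simp: card_gt_0_iff)
    ultimately show ?thesis
      using True ends fin \<open>n \<notin> S\<close> by (simp add: runs_def card_Diff_singleton)
  next
    case False
    then have "n - 1 \<notin> {i \<in> S. Suc i \<notin> S}"
      using assms by auto
    then show ?thesis
      using False ends fin \<open>n \<notin> S\<close> by (simp add: runs_def)
  qed
qed

text \<open>Sets containing \<open>n - 1\<close> carry weight 2 because extending them by \<open>n\<close> creates no new
  run; with this weight \<open>(1 + z)^n\<close> survives the induction step.\<close>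
lemma sum_runs_weighted_le:
  fixes z :: real
  assumes "0 \<le> z"
  shows "(\<Sum>S\<in>Pow {..<n}. (1/2) ^ card S * z ^ runs S * (if 0 < n \<and> n - 1 \<in> S then 2 else 1))
         \<le> (1 + z) ^ n"
proof (induction n)
  case 0
  show ?case by (simp add: runs_def)
next
  case (Suc n)
  let ?w = "\<lambda>S. (1/2::real) ^ card S * z ^ runs S"
  let ?last = "\<lambda>S. 0 < n \<and> n - 1 \<in> S"
  have split: "Pow {..<Suc n} = Pow {..<n} \<union> insert n ` Pow {..<n}"
    by (simp add: lessThan_Suc Pow_insert)
  have inj: "inj_on (insert n) (Pow {..<n})"
    by (rule inj_onI) (metis Pow_iff insert_ident lessThan_iff less_irrefl subsetD)
  have insert_weight: "?w (insert n S) * 2 = ?w S * (if ?last S then 1 else z)" if "S \<subseteq> {..<n}" for S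
  proof -
    have "finite S" "n \<notin> S"
      using that finite_subset by auto
    then show ?thesis
      using runs_insert_above [OF that] by simp
  qed
  have "(\<Sum>S\<in>Pow {..<Suc n}. ?w S * (if 0 < Suc n \<and> Suc n - 1 \<in> S then 2 else 1))
      = (\<Sum>S\<in>Pow {..<n}. ?w S) + (\<Sum>S\<in>Pow {..<n}. ?w (insert n S) * 2)"
    unfolding split
    by (subst sum.union_disjoint) (auto simp: sum.reindex [OF inj] intro!: sum.cong)
  also have "\<dots> = (\<Sum>S\<in>Pow {..<n}. ?w S * (1 + (if ?last S then 1 else z)))"
    by (simp add: sum.distrib [symmetric] distrib_left insert_weight)
  also have "\<dots> \<le> (\<Sum>S\<in>Pow {..<n}. (1 + z) * (?w S * (if ?last S then 2 else 1)))"
    by (rule sum_mono) (use assms in \<open>auto simp: algebra_simps\<close>)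
  also have "\<dots> \<le> (1 + z) * (1 + z) ^ n"
    using Suc assms by (simp add: sum_distrib_left [symmetric] mult_left_mono)
  finally show ?case by simp
qed

lemma sum_runs_card_eq_le:
  fixes z :: real
  assumes "0 \<le> z"
  shows "(\<Sum>S | S \<subseteq> {..<n} \<and> card S = t. z ^ runs S) \<le> 2 ^ t * (1 + z) ^ n"
proof -
  have "(\<Sum>S | S \<subseteq> {..<n} \<and> card S = t. z ^ runs S)
      = 2 ^ t * (\<Sum>S | S \<subseteq> {..<n} \<and> card S = t. (1/2) ^ card S * z ^ runs S)"
    by (simp add: sum_distrib_left power_one_over)
  also have "(\<Sum>S | S \<subseteq> {..<n} \<and> card S = t. (1/2) ^ card S * z ^ runs S)
      \<le> (\<Sum>S\<in>Pow {..<n}. (1/2) ^ card S * z ^ runs S * (if 0 < n \<and> n - 1 \<in> S then 2 else 1))"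
    by (rule order_trans [OF sum_mono2 sum_mono]) (use assms in auto)
  also have "\<dots> \<le> (1 + z) ^ n"
    by (rule sum_runs_weighted_le [OF assms])
  finally show ?thesis by simp
qed

section \<open>Heavy sets contain many ordinary edges\<close>

definition cyclic_runs :: "nat \<Rightarrow> nat set \<Rightarrow> nat" where
  "cyclic_runs n S = card {i \<in> S. (i + 1) mod n \<notin> S}"

definition cyclic_pairs :: "nat \<Rightarrow> nat set \<Rightarrow> nat" where
  "cyclic_pairs n S = card {i \<in> {..<n}. i \<in> S \<and> (i + 1) mod n \<in> S}"

lemma cyclic_pairs_add_cyclic_runs:
  assumes "S \<subseteq> {..<n}"
  shows "cyclic_pairs n S + cyclic_runs n S = card S"
proof -
  have "finite S"
    using assms finite_subset by blast
  then have "card S = card {i \<in> S. (i + 1) mod n \<in> S} + card {i \<in> S. (i + 1) mod n \<notin> S}"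
    by (subst card_Un_disjoint [symmetric]) (auto intro: arg_cong [where f = card])
  moreover have "{i \<in> {..<n}. i \<in> S \<and> (i + 1) mod n \<in> S} = {i \<in> S. (i + 1) mod n \<in> S}"
    using assms by auto
  ultimately show ?thesis
    unfolding cyclic_pairs_def cyclic_runs_def by simp
qed

lemma runs_le_Suc_cyclic_runs:
  assumes "S \<subseteq> {..<n}"
  shows "runs S \<le> Suc (cyclic_runs n S)"
proof -
  have "finite S"
    using assms finite_subset by blast
  have "{i \<in> S. Suc i \<notin> S} \<subseteq> insert (n - 1) {i \<in> S. (i + 1) mod n \<notin> S}"
    using assms by (force simp: less_diff_conv)
  then have "runs S \<le> card (insert (n - 1) {i \<in> S. (i + 1) mod n \<notin> S})"
    unfolding runs_def by (rule card_mono [rotated]) (use \<open>finite S\<close> in auto)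
  also have "\<dots> \<le> Suc (cyclic_runs n S)"
    unfolding cyclic_runs_def by (simp add: card_insert_le_m1 card_insert_if \<open>finite S\<close>)
  finally show ?thesis .
qed

lemma cyclic_runs_pos:
  assumes "S \<subseteq> {..<n}" and "S \<noteq> {}" and "S \<noteq> {..<n}"
  shows "0 < cyclic_runs n S"
proof (rule ccontr)
  assume "\<not> 0 < cyclic_runs n S"
  moreover have "finite S"
    using assms finite_subset by blast
  ultimately have closed: "(i + 1) mod n \<in> S" if "i \<in> S" for i
    using that unfolding cyclic_runs_def by auto
  obtain x where "x \<in> S"
    using assms by auto
  have orbit: "(x + j) mod n \<in> S" for j
  proof (induction j)
    case 0
    show ?case using \<open>x \<in> S\<close> assms(1) by auto
  next
    case (Suc j)
    then show ?case using closed [OF Suc] by (simp add: mod_Suc_eq)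
  qed
  have "{..<n} \<subseteq> S"
  proof
    fix y assume "y \<in> {..<n}"
    then have "y = (x + (n - x + y)) mod n"
      using \<open>x \<in> S\<close> assms(1) by auto
    then show "y \<in> S" using orbit by metis
  qed
  then show False
    using assms by blast
qed

definition edges_inside :: "nat \<Rightarrow> nat \<Rightarrow> (nat \<Rightarrow> nat \<Rightarrow> nat) \<Rightarrow> nat set \<Rightarrow> nat" where
  "edges_inside k m E S = card {i \<in> {..<m}. E i ` {..<k} \<subseteq> S}"

lemma induced_weight_eq:
  "induced_weight n k m l E S = edges_inside k m E S + (l - 1) * cyclic_pairs n S"
  by (simp add: induced_weight_def edges_inside_def cyclic_pairs_def)

text \<open>\<open>max 1 (runs S - 1)\<close> bounds the number of cyclic runs of a proper nonempty \<open>S\<close> from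
  below in terms of the linear count \<open>runs\<close>, whose generating function is tractable.\<close>
definition forced_edges :: "nat set \<Rightarrow> nat" where
  "forced_edges S = card S + max 1 (runs S - 1)"

text \<open>Each of the \<open>r \<ge> 1\<close> cyclic runs of \<open>S\<close> loses a helper edge, so the ordinary edges
  must make up at least \<open>(l - 1) r \<ge> r\<close> of the weight.\<close>
lemma heavy_set_edges_inside:
  assumes "S \<subseteq> {..<n}" and "S \<noteq> {}" and "card S < n" and "2 \<le> l"
    and heavy: "l * card S \<le> induced_weight n k m l E S"
  shows "forced_edges S \<le> edges_inside k m E S"
proof -
  have "S \<noteq> {..<n}"
    using \<open>card S < n\<close> by auto
  then have "1 \<le> cyclic_runs n S"
    using cyclic_runs_pos [OF assms(1,2)] by simp
  moreover have "runs S \<le> Suc (cyclic_runs n S)"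
    by (rule runs_le_Suc_cyclic_runs [OF assms(1)])
  moreover have "card S + cyclic_runs n S \<le> edges_inside k m E S"
  proof -
    obtain l' where "l = l' + 2"
      using \<open>2 \<le> l\<close> by (metis add.commute le_Suc_ex)
    with heavy have "2 * card S + l' * card S
        \<le> edges_inside k m E S + cyclic_pairs n S + l' * cyclic_pairs n S"
      by (simp add: induced_weight_eq algebra_simps)
    moreover have split: "cyclic_pairs n S + cyclic_runs n S = card S"
      by (rule cyclic_pairs_add_cyclic_runs [OF assms(1)])
    moreover from split have "l' * cyclic_pairs n S \<le> l' * card S"
      by simp
    ultimately show ?thesis
      by linarith
  qed
  ultimately show ?thesis
    unfolding forced_edges_def by linarith
qed

section \<open>Hits of a uniformly random function\<close>

lemma card_PiE_if:
  assumes "finite I" and "J \<subseteq> I"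
  shows "card (PiE I (\<lambda>i. if i \<in> J then A else B)) = card A ^ card J * card B ^ card (I - J)"
proof -
  have "card (PiE I (\<lambda>i. if i \<in> J then A else B)) = (\<Prod>i\<in>I. if i \<in> J then card A else card B)"
    using \<open>finite I\<close> by (simp add: card_PiE if_distrib)
  also have "\<dots> = card A ^ card (I \<inter> J) * card B ^ card (I - J)"
    using \<open>finite I\<close> by (simp add: prod.If_cases Diff_eq)
  also have "I \<inter> J = J"
    using \<open>J \<subseteq> I\<close> by blast
  finally show ?thesis .
qed

lemma card_PiE_many_hits_le:
  assumes "finite I" and "finite B" and "A \<subseteq> B"
  shows "card {f \<in> I \<rightarrow>\<^sub>E B. m \<le> card {i \<in> I. f i \<in> A}}
         \<le> (card I choose m) * card A ^ m * card B ^ (card I - m)"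
proof -
  let ?F = "\<lambda>J. PiE I (\<lambda>i. if i \<in> J then A else B)"
  let ?J = "{J. J \<subseteq> I \<and> card J = m}"
  have cover: "{f \<in> I \<rightarrow>\<^sub>E B. m \<le> card {i \<in> I. f i \<in> A}} \<subseteq> (\<Union>J\<in>?J. ?F J)"
  proof
    fix f assume f: "f \<in> {f \<in> I \<rightarrow>\<^sub>E B. m \<le> card {i \<in> I. f i \<in> A}}"
    then have "m \<le> card {i \<in> I. f i \<in> A}"
      by simp
    then obtain J where J: "J \<subseteq> {i \<in> I. f i \<in> A}" "card J = m"
      by (rule obtain_subset_with_card_n)
    have "f \<in> ?F J"
    proof (rule PiE_I)
      show "f i \<in> (if i \<in> J then A else B)" if "i \<in> I" for i
        using f J(1) that by auto
      show "f i = undefined" if "i \<notin> I" for i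
        using f that by auto
    qed
    with J show "f \<in> (\<Union>J\<in>?J. ?F J)"
      by blast
  qed
  have card_F: "card (?F J) = card A ^ m * card B ^ (card I - m)" if "J \<in> ?J" for J
  proof -
    have "finite J" "J \<subseteq> I" "card J = m"
      using that \<open>finite I\<close> finite_subset by auto
    then show ?thesis
      using \<open>finite I\<close> by (simp add: card_PiE_if card_Diff_subset)
  qed
  have "finite ?J"
    by (rule finite_subset [of _ "Pow I"]) (use \<open>finite I\<close> in auto)
  moreover have "finite (?F J)" for J
    using assms finite_subset by (auto intro!: finite_PiE)
  ultimately have "card {f \<in> I \<rightarrow>\<^sub>E B. m \<le> card {i \<in> I. f i \<in> A}} \<le> card (\<Union>J\<in>?J. ?F J)"
    by (intro card_mono [OF _ cover]) blast
  also have "\<dots> \<le> (\<Sum>J\<in>?J. card (?F J))"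
    by (rule card_UN_le) fact
  also have "\<dots> = (card I choose m) * card A ^ m * card B ^ (card I - m)"
    using card_F n_subsets [OF \<open>finite I\<close>, of m] by simp
  finally show ?thesis .
qed

lemma prob_PiE_many_hits_le:
  assumes "finite I" and "finite B" and "A \<subseteq> B" and "B \<noteq> {}"
  shows "measure_pmf.prob (pmf_of_set (I \<rightarrow>\<^sub>E B)) {f. m \<le> card {i \<in> I. f i \<in> A}}
         \<le> (card I choose m) * (card A / card B) ^ m"
proof -
  let ?hits = "{f \<in> I \<rightarrow>\<^sub>E B. m \<le> card {i \<in> I. f i \<in> A}}"
  have "I \<rightarrow>\<^sub>E B \<noteq> {}" "finite (I \<rightarrow>\<^sub>E B)"
    using assms by (auto simp: finite_PiE PiE_eq_empty_iff)
  then have prob: "measure_pmf.prob (pmf_of_set (I \<rightarrow>\<^sub>E B)) {f. m \<le> card {i \<in> I. f i \<in> A}}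
      = card ?hits / card (I \<rightarrow>\<^sub>E B)"
    by (simp add: measure_pmf_of_set Int_def)
  have "real (card ?hits) \<le> real ((card I choose m) * card A ^ m * card B ^ (card I - m))"
    using card_PiE_many_hits_le [OF assms(1-3), of m] by (simp only: of_nat_le_iff)
  then have count: "real (card ?hits) \<le> (card I choose m) * card A ^ m * card B ^ (card I - m)"
    by simp
  have "0 < card B"
    using assms by (simp add: card_gt_0_iff)
  show ?thesis
  proof (cases "m \<le> card I")
    case True
    have "real (card (I \<rightarrow>\<^sub>E B)) = card B ^ m * card B ^ (card I - m)"
      using assms(1) True by (simp add: card_PiE flip: power_add)
    then have "card ?hits / card (I \<rightarrow>\<^sub>E B)
        \<le> (card I choose m) * card A ^ m * card B ^ (card I - m) / (card B ^ m * card B ^ (card I - m))"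
      by (simp only:) (rule divide_right_mono [OF count], simp add: \<open>0 < card B\<close>)
    also have "\<dots> = (card I choose m) * (card A / card B) ^ m"
      using \<open>0 < card B\<close> by (simp add: power_divide)
    finally show ?thesis
      unfolding prob .
  next
    case False
    then show ?thesis
      using count by (simp add: prob binomial_eq_0)
  qed
qed

lemma edges_inside_eq_card_hits:
  assumes "E \<in> {..<M} \<rightarrow>\<^sub>E ({..<k} \<rightarrow>\<^sub>E {..<n})"
  shows "edges_inside k M E S = card {i \<in> {..<M}. E i \<in> {..<k} \<rightarrow>\<^sub>E S}"
proof -
  have "E i ` {..<k} \<subseteq> S \<longleftrightarrow> E i \<in> {..<k} \<rightarrow>\<^sub>E S" if "i < M" for i
    using PiE_mem [OF assms, of i] that by (auto simp: PiE_iff image_subset_iff)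
  then show ?thesis
    unfolding edges_inside_def by (metis (no_types, lifting) lessThan_iff)
qed

lemma prob_edges_inside_ge:
  assumes "S \<subseteq> {..<n}" and "0 < n"
  shows "measure_pmf.prob (edges_pmf n k M) {E. m \<le> edges_inside k M E S}
         \<le> (M choose m) * (card S / n) ^ (k * m)"
proof -
  let ?B = "{..<k} \<rightarrow>\<^sub>E {..<n}" and ?A = "{..<k} \<rightarrow>\<^sub>E S"
  have "finite S"
    using assms finite_subset by blast
  have "{..<M} \<rightarrow>\<^sub>E ?B \<noteq> {}"
    using assms by (auto simp: PiE_eq_empty_iff)
  then have support: "set_pmf (edges_pmf n k M) = {..<M} \<rightarrow>\<^sub>E ?B"
    by (simp add: edges_pmf_def set_pmf_of_set finite_PiE)
  have same_event: "{E. m \<le> edges_inside k M E S} \<inter> set_pmf (edges_pmf n k M)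
      \<subseteq> {E. m \<le> card {i \<in> {..<M}. E i \<in> ?A}}"
    by (auto simp: support edges_inside_eq_card_hits)
  have "measure_pmf.prob (edges_pmf n k M) {E. m \<le> edges_inside k M E S}
      = measure_pmf.prob (edges_pmf n k M)
          ({E. m \<le> edges_inside k M E S} \<inter> set_pmf (edges_pmf n k M))"
    by (simp add: measure_Int_set_pmf)
  also have "\<dots> \<le> measure_pmf.prob (edges_pmf n k M) {E. m \<le> card {i \<in> {..<M}. E i \<in> ?A}}"
    by (rule measure_pmf.finite_measure_mono [OF same_event]) simp
  also have "\<dots> \<le> (card {..<M} choose m) * (card ?A / card ?B) ^ m"
    unfolding edges_pmf_def
    by (rule prob_PiE_many_hits_le) (use assms in \<open>auto simp: PiE_eq_empty_iff finite_PiE\<close>)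
  also have "(card ?A / card ?B) ^ m = (card S / n) ^ (k * m)"
    using \<open>finite S\<close> by (simp add: card_PiE power_mult power_divide)
  also have "card {..<M} = M"
    by simp
  finally show ?thesis .
qed

section \<open>The union bound over heavy sets\<close>

lemma power_div_fact_le_exp:
  fixes x :: real
  assumes "0 \<le> x"
  shows "x ^ m / fact m \<le> exp x"
proof -
  have "(\<Sum>n\<in>{m}. x ^ n /\<^sub>R fact n) \<le> (\<Sum>n. x ^ n /\<^sub>R fact n)"
    using assms by (intro sum_le_suminf) (auto simp: summable_exp)
  also have "\<dots> = exp x"
    by (rule sums_unique [OF exp_converges, symmetric])
  finally show ?thesis
    by (simp add: divide_inverse mult.commute)
qed

text \<open>With \<open>k \<ge> 2\<close> the factor \<open>(t/n)^(k m)\<close> beats \<open>M choose m \<le> n^m / m!\<close>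
  as soon as \<open>m \<ge> t\<close>, using \<open>m! \<ge> (m/e)^m\<close>.\<close>
lemma binomial_mult_power_le:
  fixes M m n t k :: nat
  assumes "0 < t" "t \<le> m" "t \<le> n" "M \<le> n" "2 \<le> k"
  shows "(M choose m) * (t / n) ^ (k * m) \<le> (exp 1 * t / n) ^ m"
proof -
  have "0 < real n" "0 < real t"
    using assms by auto
  have q: "0 \<le> real t / n" "real t / n \<le> 1"
    using assms by auto
  have "real (M choose m) * fact m \<le> real n ^ m"
  proof -
    have "(M choose m) * fact m \<le> n ^ m"
      using binomial_fact_pow [of M m] power_mono [OF \<open>M \<le> n\<close>] by (meson le_trans zero_le)
    then show ?thesis
      by (metis of_nat_fact of_nat_le_iff of_nat_mult of_nat_power)
  qed
  then have binom: "real (M choose m) \<le> real n ^ m / fact m"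
    by (simp add: field_simps)
  have fact: "real t ^ m / exp (real m) \<le> fact m"
  proof -
    have "real t ^ m / fact m \<le> real m ^ m / fact m"
      using assms by (intro divide_right_mono power_mono) auto
    also have "\<dots> \<le> exp (real m)"
      by (rule power_div_fact_le_exp) simp
    finally show ?thesis
      by (simp add: field_simps)
  qed
  have "(M choose m) * (t / n) ^ (k * m) \<le> real n ^ m / fact m * (t / n) ^ (2 * m)"
    using binom q assms by (intro mult_mono power_decreasing) auto
  also have "\<dots> = (real t ^ 2 / n) ^ m / fact m"
    using \<open>0 < real n\<close> by (simp add: field_simps power_mult power2_eq_square power_mult_distrib)
  also have "\<dots> \<le> (real t ^ 2 / n) ^ m / (real t ^ m / exp (real m))"
    by (rule divide_left_mono [OF fact]) (use \<open>0 < real n\<close> \<open>0 < real t\<close> in auto)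
  also have "\<dots> = (exp 1 * t / n) ^ m"
    using \<open>0 < real n\<close> \<open>0 < real t\<close>
    by (simp add: field_simps power_mult_distrib power2_eq_square exp_of_nat_mult [symmetric])
  finally show ?thesis .
qed

lemma prob_forced_edges_inside_le:
  assumes "S \<subseteq> {..<n}" and "0 < card S" and "2 \<le> k" and "M \<le> n"
  shows "measure_pmf.prob (edges_pmf n k M) {E. forced_edges S \<le> edges_inside k M E S}
         \<le> (exp 1 * card S / n) ^ forced_edges S"
proof -
  have "card S \<le> n"
    using card_mono [OF _ assms(1)] by simp
  with assms have "measure_pmf.prob (edges_pmf n k M) {E. forced_edges S \<le> edges_inside k M E S}
      \<le> (M choose forced_edges S) * (card S / n) ^ (k * forced_edges S)"
    by (intro prob_edges_inside_ge) auto
  also have "\<dots> \<le> (exp 1 * card S / n) ^ forced_edges S"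
    using assms \<open>card S \<le> n\<close> by (intro binomial_mult_power_le) (auto simp: forced_edges_def)
  finally show ?thesis .
qed

lemma prob_heavy_set_le:
  fixes \<delta> :: real
  assumes "2 \<le> k" and "2 \<le> l" and "M \<le> n" and "\<delta> \<le> 1"
  shows "measure_pmf.prob (edges_pmf n k M)
           {E. \<exists>S \<subseteq> {..<n}. 0 < card S \<and> real (card S) < \<delta> * real n \<and>
                 l * card S \<le> induced_weight n k M l E S}
         \<le> (\<Sum>S | S \<subseteq> {..<n} \<and> 0 < card S \<and> real (card S) < \<delta> * real n.
              (exp 1 * card S / n) ^ forced_edges S)"
    (is "measure_pmf.prob _ ?heavy \<le> (\<Sum>S\<in>?small. ?bound S)")
proof -
  let ?inside = "\<lambda>S. {E. forced_edges S \<le> edges_inside k M E S}"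
  have "finite ?small"
    by (rule finite_subset [of _ "Pow {..<n}"]) auto
  have small_lt: "card S < n" if "S \<in> ?small" for S
  proof -
    have "real (card S) < real n"
      using that mult_right_mono [OF assms(4), of "real n"] by auto
    then show ?thesis by simp
  qed
  have "?heavy \<subseteq> (\<Union>S\<in>?small. ?inside S)"
  proof
    fix E assume "E \<in> ?heavy"
    then obtain S where S: "S \<subseteq> {..<n}" "0 < card S" "real (card S) < \<delta> * real n"
      and heavy: "l * card S \<le> induced_weight n k M l E S"
      by blast
    then have "S \<in> ?small"
      by simp
    moreover have "S \<noteq> {}"
      using S(2) by auto
    ultimately have "E \<in> ?inside S"
      using heavy_set_edges_inside [OF S(1) _ small_lt \<open>2 \<le> l\<close> heavy] by simp
    with \<open>S \<in> ?small\<close> show "E \<in> (\<Union>S\<in>?small. ?inside S)"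
      by blast
  qed
  then have "measure_pmf.prob (edges_pmf n k M) ?heavy
      \<le> measure_pmf.prob (edges_pmf n k M) (\<Union>S\<in>?small. ?inside S)"
    by (rule measure_pmf.finite_measure_mono) simp
  also have "\<dots> \<le> (\<Sum>S\<in>?small. measure_pmf.prob (edges_pmf n k M) (?inside S))"
    by (rule measure_pmf.finite_measure_subadditive_finite) (use \<open>finite ?small\<close> in auto)
  also have "\<dots> \<le> (\<Sum>S\<in>?small. ?bound S)"
    using assms(1,3) by (intro sum_mono prob_forced_edges_inside_le) auto
  finally show ?thesis .
qed

lemma sum_card_eq_bound_le:
  assumes "2 \<le> t" and "exp 1 * t \<le> n"
  shows "(\<Sum>S | S \<subseteq> {..<n} \<and> card S = t. (exp 1 * card S / n) ^ forced_edges S)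
         \<le> (2 * exp (exp 1)) ^ t * (exp 1 * t / n) ^ (t - 1)"
proof -
  define z where "z = exp 1 * t / n"
  have "0 < exp 1 * real t"
    using assms by simp
  then have "0 < real n"
    using assms by linarith
  then have "0 \<le> z" "z \<le> 1" and zn: "z * n = exp 1 * t"
    using assms by (auto simp: z_def field_simps)
  have "(\<Sum>S | S \<subseteq> {..<n} \<and> card S = t. (exp 1 * card S / n) ^ forced_edges S)
      \<le> (\<Sum>S | S \<subseteq> {..<n} \<and> card S = t. z ^ (t - 1) * z ^ runs S)"
  proof (rule sum_mono)
    fix S assume "S \<in> {S. S \<subseteq> {..<n} \<and> card S = t}"
    then have "card S = t" by simp
    then have "z ^ forced_edges S \<le> z ^ (t - 1 + runs S)"
      using \<open>0 \<le> z\<close> \<open>z \<le> 1\<close> \<open>2 \<le> t\<close>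
      by (intro power_decreasing) (auto simp: forced_edges_def max_def)
    then show "(exp 1 * card S / n) ^ forced_edges S \<le> z ^ (t - 1) * z ^ runs S"
      using \<open>card S = t\<close> by (simp add: z_def power_add)
  qed
  also have "\<dots> = z ^ (t - 1) * (\<Sum>S | S \<subseteq> {..<n} \<and> card S = t. z ^ runs S)"
    by (simp add: sum_distrib_left)
  also have "\<dots> \<le> z ^ (t - 1) * (2 ^ t * (1 + z) ^ n)"
    using \<open>0 \<le> z\<close> by (intro mult_left_mono sum_runs_card_eq_le) auto
  also have "\<dots> \<le> z ^ (t - 1) * (2 ^ t * exp (exp 1) ^ t)"
  proof -
    have "(1 + z) ^ n \<le> exp z ^ n"
      using \<open>0 \<le> z\<close> by (intro power_mono) (auto simp: add.commute)
    also have "\<dots> = exp (exp 1) ^ t"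
      by (simp add: mult.commute zn flip: exp_of_nat_mult)
    finally show ?thesis
      using \<open>0 \<le> z\<close> by (intro mult_left_mono) auto
  qed
  finally show ?thesis
    by (simp add: z_def power_mult_distrib mult_ac)
qed

lemma power_linear_le_geometric:
  fixes a :: real
  assumes "0 \<le> a" and "2 \<le> t" and "4 * a * t \<le> 1"
  shows "(a * t) ^ (t - 1) \<le> 8 * a * (1/2) ^ t"
proof -
  obtain u where t: "t = u + 2"
    using \<open>2 \<le> t\<close> by (metis add.commute le_Suc_ex)
  have "real u + 2 \<le> 2 * 2 ^ u"
  proof -
    have "u < 2 ^ u"
      by (rule less_exp)
    then have "real u + 1 \<le> 2 ^ u"
      by (metis Suc_leI of_nat_Suc of_nat_le_iff of_nat_numeral of_nat_power add.commute)
    then show ?thesis by linarith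
  qed
  then have "real t * (1/4) ^ u \<le> 2 * 2 ^ u * (1/4) ^ u"
    unfolding t by (intro mult_right_mono) auto
  also have "\<dots> = 8 * (1/2) ^ t"
    by (simp add: t power_add power_mult_distrib [symmetric] flip: power_mult)
  finally have geometric: "real t * (1/4) ^ u \<le> 8 * (1/2) ^ t" .
  have "(a * t) ^ (t - 1) = a * t * (a * t) ^ u"
    by (simp add: t)
  also have "\<dots> \<le> a * t * (1/4) ^ u"
    using assms by (intro mult_left_mono power_mono) auto
  also have "\<dots> \<le> a * (8 * (1/2) ^ t)"
    using geometric \<open>0 \<le> a\<close> by (simp add: mult.assoc mult_left_mono)
  finally show ?thesis by simp
qed

lemma sum_card_one_bound_eq:
  "(\<Sum>S | S \<subseteq> {..<n} \<and> card S = 1. (exp 1 * card S / n) ^ forced_edges S) = exp 1 ^ 2 / n"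
proof -
  have "(\<Sum>S | S \<subseteq> {..<n} \<and> card S = 1. (exp 1 * card S / n) ^ forced_edges S)
      = (\<Sum>S | S \<subseteq> {..<n} \<and> card S = 1. (exp 1 / n) ^ 2)"
    by (intro sum.cong) (auto simp: card_1_singleton_iff forced_edges_def power2_eq_square)
  also have "\<dots> = exp 1 ^ 2 / n"
    by (cases "n = 0") (simp_all add: n_subsets power2_eq_square)
  finally show ?thesis .
qed

lemma power_exp_le_const_power:
  fixes C :: real and t n :: nat
  assumes C: "2 * exp (exp 1 + 1) \<le> C" and "0 < t" and "0 < n"
  shows "(2 * exp (exp 1)) ^ t * (exp 1 * t / n) ^ (t - 1) \<le> C * (C / n * t) ^ (t - 1)"
proof -
  define K :: real where "K = 2 * exp (exp 1)"
  have "0 \<le> K" "K * exp 1 \<le> C"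
    using C by (auto simp: K_def exp_add mult_ac)
  moreover have "K \<le> K * exp 1"
    using mult_left_mono [of 1 "exp 1" K] \<open>0 \<le> K\<close> by simp
  ultimately have K: "0 \<le> K" "K \<le> C" "K * exp 1 \<le> C"
    by linarith+
  have "K ^ t = K * K ^ (t - 1)"
    using \<open>0 < t\<close> by (metis Suc_diff_1 power_Suc)
  then have "K ^ t * (exp 1 * t / n) ^ (t - 1) = K * (K * (exp 1 * t / n)) ^ (t - 1)"
    by (simp only: power_mult_distrib mult.assoc)
  also have "\<dots> \<le> C * (C / n * t) ^ (t - 1)"
  proof -
    have "K * (exp 1 * t / n) = (K * exp 1) * t / n"
      by simp
    also have "\<dots> \<le> C / n * t"
      using K \<open>0 < n\<close> by (simp add: divide_right_mono mult_right_mono)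
    finally have "K * (exp 1 * t / n) \<le> C / n * t" .
    moreover have "0 \<le> K * (exp 1 * t / n)"
      using K by simp
    ultimately have "(K * (exp 1 * t / n)) ^ (t - 1) \<le> (C / n * t) ^ (t - 1)"
      by (rule power_mono)
    with K show ?thesis
      by (intro mult_mono) auto
  qed
  finally show ?thesis
    unfolding K_def .
qed

lemma sum_card_eq_bound_le_geometric:
  fixes C :: real
  assumes C: "2 * exp (exp 1 + 1) \<le> C" and "0 < t" and "4 * C * t \<le> n"
  shows "(\<Sum>S | S \<subseteq> {..<n} \<and> card S = t. (exp 1 * card S / n) ^ forced_edges S)
         \<le> 8 * C ^ 2 / n * (1/2) ^ t"
proof -
  have "exp 1 \<le> exp (exp 1 + 1 :: real)"
    using exp_gt_zero [of 1] by simp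
  then have "2 * exp 1 \<le> C" "0 < C"
    using C exp_gt_zero [of 1] by linarith+
  then have "0 < 4 * C * t"
    using \<open>0 < t\<close> by simp
  then have "0 < real n"
    using assms by linarith
  show ?thesis
  proof (cases "t = 1")
    case True
    have "exp 1 \<le> C"
      using \<open>2 * exp 1 \<le> C\<close> exp_gt_zero [of 1] by linarith
    then have "exp 1 ^ 2 \<le> C ^ 2"
      by (intro power_mono) auto
    then have "exp 1 ^ 2 \<le> 4 * C ^ 2"
      using zero_le_power2 [of C] by linarith
    then show ?thesis
      unfolding True sum_card_one_bound_eq by (simp add: divide_right_mono)
  next
    case False
    then have "2 \<le> t"
      using \<open>0 < t\<close> by simp
    have "exp 1 \<le> 4 * C"
      using \<open>2 * exp 1 \<le> C\<close> exp_gt_zero [of 1] by linarith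
    then have "exp 1 * t \<le> 4 * C * t"
      by (intro mult_right_mono) auto
    then have "exp 1 * t \<le> n"
      using assms by linarith
    then have "(\<Sum>S | S \<subseteq> {..<n} \<and> card S = t. (exp 1 * card S / n) ^ forced_edges S)
        \<le> (2 * exp (exp 1)) ^ t * (exp 1 * t / n) ^ (t - 1)"
      by (rule sum_card_eq_bound_le [OF \<open>2 \<le> t\<close>])
    also have "\<dots> \<le> C * (C / n * t) ^ (t - 1)"
      by (rule power_exp_le_const_power [OF C \<open>0 < t\<close>]) (use \<open>0 < real n\<close> in simp)
    also have "\<dots> \<le> C * (8 * (C / n) * (1/2) ^ t)"
      using assms \<open>0 < C\<close> \<open>0 < real n\<close> \<open>2 \<le> t\<close>
      by (intro mult_left_mono power_linear_le_geometric) (auto simp: field_simps)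
    also have "\<dots> = 8 * C ^ 2 / n * (1/2) ^ t"
      by (simp add: power2_eq_square)
    finally show ?thesis .
  qed
qed

lemma sum_half_power_le:
  assumes "finite T"
  shows "(\<Sum>t\<in>T. (1/2::real) ^ t) \<le> 2"
proof -
  have "(\<Sum>t\<in>T. (1/2::real) ^ t) \<le> (\<Sum>t. (1/2) ^ t)"
    using assms by (intro sum_le_suminf summable_geometric) auto
  also have "\<dots> = 2"
    by (simp add: suminf_geometric)
  finally show ?thesis .
qed

lemma sum_small_sets_bound_le:
  fixes C \<delta> :: real
  assumes C: "2 * exp (exp 1 + 1) \<le> C" and "4 * C * \<delta> \<le> 1"
  shows "(\<Sum>S | S \<subseteq> {..<n} \<and> 0 < card S \<and> real (card S) < \<delta> * real n.
           (exp 1 * card S / n) ^ forced_edges S)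
         \<le> 16 * C ^ 2 / n"
proof -
  let ?bound = "\<lambda>S. (exp 1 * card S / n) ^ forced_edges S"
  let ?small = "{S. S \<subseteq> {..<n} \<and> 0 < card S \<and> real (card S) < \<delta> * real n}"
  let ?T = "{t \<in> {1..n}. real t < \<delta> * n}"
  have "0 < C"
    using C exp_gt_zero [of "exp 1 + 1"] by linarith
  have "(\<Sum>S\<in>?small. ?bound S) = (\<Sum>t\<in>?T. \<Sum>S | S \<in> ?small \<and> card S = t. ?bound S)"
  proof (rule sum.group [symmetric])
    show "finite ?small"
      by (rule finite_subset [of _ "Pow {..<n}"]) auto
    show "card ` ?small \<subseteq> ?T"
      using card_mono [of "{..<n}"] by fastforce
  qed simp
  also have "\<dots> \<le> (\<Sum>t\<in>?T. 8 * C ^ 2 / n * (1/2) ^ t)"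
  proof (rule sum_mono)
    fix t assume t: "t \<in> ?T"
    then have same_sets: "{S. S \<in> ?small \<and> card S = t} = {S. S \<subseteq> {..<n} \<and> card S = t}"
      by auto
    have "4 * C * t \<le> n"
    proof -
      have "4 * C * t \<le> 4 * C * (\<delta> * n)"
        using t \<open>0 < C\<close> by (intro mult_left_mono) auto
      also have "\<dots> \<le> n"
        using assms(2) mult_right_mono [OF assms(2), of "real n"] by (simp add: mult_ac)
      finally show ?thesis .
    qed
    then show "(\<Sum>S | S \<in> ?small \<and> card S = t. ?bound S) \<le> 8 * C ^ 2 / n * (1/2) ^ t"
      unfolding same_sets using t by (intro sum_card_eq_bound_le_geometric [OF C]) auto
  qed
  also have "\<dots> = 8 * C ^ 2 / n * (\<Sum>t\<in>?T. (1/2) ^ t)"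
    by (simp add: sum_distrib_left)
  also have "\<dots> \<le> 8 * C ^ 2 / n * 2"
    by (intro mult_left_mono sum_half_power_le) auto
  finally show ?thesis
    by simp
qed

theorem lemma5:
  fixes k l :: nat and c :: real
  assumes "k \<ge> 2" and "l \<ge> 2" and "c \<le> 1"
  shows "\<exists>\<delta>>0. (\<lambda>n. measure_pmf.prob (edges_pmf n k (nat \<lfloor>c * real n\<rfloor>))
            {E. \<exists>S \<subseteq> {..<n}. 0 < card S \<and> real (card S) < \<delta> * real n \<and>
                  l * card S \<le> induced_weight n k (nat \<lfloor>c * real n\<rfloor>) l E S})
          \<longlonglongrightarrow> 0"
proof -
  define C :: real where "C = 2 * exp (exp 1 + 1)"
  define \<delta> where "\<delta> = 1 / (4 * C)"
  have "2 \<le> C"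
    using exp_ge_add_one_self [of "exp 1 + 1"] exp_gt_zero [of 1] by (simp add: C_def)
  then have "0 < \<delta>" "\<delta> \<le> 1" "4 * C * \<delta> \<le> 1"
    by (auto simp: \<delta>_def)
  have "measure_pmf.prob (edges_pmf n k (nat \<lfloor>c * real n\<rfloor>))
          {E. \<exists>S \<subseteq> {..<n}. 0 < card S \<and> real (card S) < \<delta> * real n \<and>
                l * card S \<le> induced_weight n k (nat \<lfloor>c * real n\<rfloor>) l E S}
        \<le> 16 * C ^ 2 / n" (is "?prob n \<le> _") for n
  proof -
    have "c * real n \<le> real n"
      using mult_right_mono [OF \<open>c \<le> 1\<close>, of "real n"] by simp
    then have "nat \<lfloor>c * real n\<rfloor> \<le> n"
      by linarith
    then show ?thesis
      using \<open>\<delta> \<le> 1\<close> \<open>4 * C * \<delta> \<le> 1\<close> unfolding C_def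
      by (intro order_trans [OF prob_heavy_set_le [OF assms(1,2)] sum_small_sets_bound_le]) auto
  qed
  then have "?prob \<longlonglongrightarrow> 0"
    by (intro tendsto_sandwich [OF _ _ tendsto_const lim_const_over_n [of "16 * C ^ 2"]])
      (simp_all add: always_eventually)
  with \<open>0 < \<delta>\<close> show ?thesis
    by blast
qed

end
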